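(* Let $n\ge3$ and let $L$ and ${}^*L=e^{\sigma(x)}L+\beta$ be as in the context. Define $K_{ijk}=\frac{1}{L}\big[c_{ijk}-(h_{ij}M_k+h_{kj}M_i+h_{ki}M_j)\big]$ with $M_i=\frac{c_i}{n+1}$, and ${}^*K_{ijk}$ by the same formula built from ${}^*L$. Then ${}^*K_{ijk}=e^{\sigma(x)}K_{ijk}$.
   Context: $M$ is a smooth manifold of dimension $n$ with local coordinates $(x^i)$ and induced fiber coordinates $(y^i)$ on $TM$. $L(x,y)$ is a Finsler metric: positive and smooth for $y\neq0$, positively homogeneous of degree 1 in $y$, with positive definite fundamental tensor $g_{ij}=\frac12\frac{\partial^2L^2}{\partial y^i\partial y^j}$ and inverse $g^{ij}$. $\sigma(x)$ is a smooth function on $M$ and $\beta(x,y)=b_i(x)y^i$ is a 1-form; the conformal $\beta$-change is ${}^*L=e^{\sigma(x)}L+\beta$, assumed to be again a Finsler metric. Notation: $l_i=\partial L/\partial y^i$, $h_{ij}=g_{ij}-l_il_j$, $c_{ijk}=\frac12\partial g_{ij}/\partial y^k$, $c_i=g^{jk}c_{ijk}$. Quantities built from ${}^*L$ by the same formulas (using ${}^*g_{ij}$ and its inverse ${}^*g^{ij}$) are denoted with a left asterisk. *)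

theory Defs
  imports "HOL-Analysis.Analysis"
begin

text \<open>Everything is pointwise in x: we work on the fibre T_xM = R^n at a fixed point x,
  so L is a function of y only, sigma(x) is a real number and b_i(x) a vector.\<close>

definition pd :: "'n::finite \<Rightarrow> (real^'n \<Rightarrow> real) \<Rightarrow> real^'n \<Rightarrow> real" where
  "pd i f y = deriv (\<lambda>t. f (y + t *\<^sub>R axis i 1)) 0"

fun iter_pd :: "'n::finite list \<Rightarrow> (real^'n \<Rightarrow> real) \<Rightarrow> real^'n \<Rightarrow> real" where
  "iter_pd [] f = f"
| "iter_pd (i # is) f = pd i (iter_pd is f)"

definition smooth_off0 :: "(real^'n::finite \<Rightarrow> real) \<Rightarrow> bool" where
  "smooth_off0 f \<longleftrightarrow> (\<forall>is. iter_pd is f differentiable_on (UNIV - {0}))"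

definition fund_g :: "(real^'n::finite \<Rightarrow> real) \<Rightarrow> 'n \<Rightarrow> 'n \<Rightarrow> real^'n \<Rightarrow> real" where
  "fund_g L i j y = 1/2 * pd i (pd j (\<lambda>z. (L z)^2)) y"

definition fund_ginv :: "(real^'n::finite \<Rightarrow> real) \<Rightarrow> 'n \<Rightarrow> 'n \<Rightarrow> real^'n \<Rightarrow> real" where
  "fund_ginv L i j y = matrix_inv (\<chi> a b. fund_g L a b y) $ i $ j"

definition finsler :: "(real^'n::finite \<Rightarrow> real) \<Rightarrow> bool" where
  "finsler L \<longleftrightarrow> smooth_off0 L
     \<and> (\<forall>y. y \<noteq> 0 \<longrightarrow> L y > 0)
     \<and> (\<forall>y (t::real). y \<noteq> 0 \<longrightarrow> t > 0 \<longrightarrow> L (t *\<^sub>R y) = t * L y)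
     \<and> (\<forall>y v. y \<noteq> 0 \<longrightarrow> v \<noteq> 0 \<longrightarrow> (\<Sum>i\<in>UNIV. \<Sum>j\<in>UNIV. fund_g L i j y * v$i * v$j) > 0)"

definition l_vec :: "(real^'n::finite \<Rightarrow> real) \<Rightarrow> 'n \<Rightarrow> real^'n \<Rightarrow> real" where
  "l_vec L i y = pd i L y"

definition h_ang :: "(real^'n::finite \<Rightarrow> real) \<Rightarrow> 'n \<Rightarrow> 'n \<Rightarrow> real^'n \<Rightarrow> real" where
  "h_ang L i j y = fund_g L i j y - l_vec L i y * l_vec L j y"

definition cartan :: "(real^'n::finite \<Rightarrow> real) \<Rightarrow> 'n \<Rightarrow> 'n \<Rightarrow> 'n \<Rightarrow> real^'n \<Rightarrow> real" where
  "cartan L i j k y = 1/2 * pd k (fund_g L i j) y"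

definition cartan_tr :: "(real^'n::finite \<Rightarrow> real) \<Rightarrow> 'n \<Rightarrow> real^'n \<Rightarrow> real" where
  "cartan_tr L i y = (\<Sum>j\<in>UNIV. \<Sum>k\<in>UNIV. fund_ginv L j k y * cartan L i j k y)"

definition M_vec :: "(real^'n::finite \<Rightarrow> real) \<Rightarrow> 'n \<Rightarrow> real^'n \<Rightarrow> real" where
  "M_vec L i y = cartan_tr L i y / (real CARD('n) + 1)"

definition K_tensor :: "(real^'n::finite \<Rightarrow> real) \<Rightarrow> 'n \<Rightarrow> 'n \<Rightarrow> 'n \<Rightarrow> real^'n \<Rightarrow> real" where
  "K_tensor L i j k y = (1 / L y) * (cartan L i j k y
      - (h_ang L i j y * M_vec L k y + h_ang L k j y * M_vec L i y + h_ang L k i y * M_vec L j y))"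

end

theory Submission
  imports Defs
begin

text \<open>Write \<open>\<phi> = exp \<sigma>\<close>, \<open>L' = \<phi> L + \<beta>\<close> and \<open>\<tau> = \<phi> L' / L\<close>.
  Since \<open>\<beta>\<close> is linear, all second and third derivatives of \<open>L'\<close> are \<open>\<phi>\<close> times those
  of \<open>L\<close>; hence \<open>h'\<^sub>i\<^sub>j = \<tau> h\<^sub>i\<^sub>j\<close>, \<open>\<tau> g\<^sub>i\<^sub>j = g'\<^sub>i\<^sub>j - l'\<^sub>i l'\<^sub>j + \<tau> l\<^sub>i l\<^sub>j\<close> and
  \<open>c'\<^sub>i\<^sub>j\<^sub>k = \<tau> c\<^sub>i\<^sub>j\<^sub>k + \<phi>/(2L) (h\<^sub>i\<^sub>j m\<^sub>k + h\<^sub>k\<^sub>j m\<^sub>i + h\<^sub>k\<^sub>i m\<^sub>j)\<close> with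
  \<open>m\<^sub>i = b\<^sub>i - (\<beta>/L) l\<^sub>i\<close>, a covector annihilating \<open>y\<close>.
  Inverting the rank-two update of \<open>g\<close> and using \<open>g\<^sup>-\<^sup>1 l = y/L\<close>, \<open>g'\<^sup>-\<^sup>1 l' = y/L'\<close>
  shows that \<open>\<tau> g'\<^sup>i\<^sup>j - g\<^sup>i\<^sup>j\<close> only has terms with a factor \<open>y\<^sup>i\<close> or \<open>y\<^sup>j\<close>, which are
  killed by \<open>c'\<^sub>i\<^sub>j\<^sub>k y\<^sup>k = 0\<close>. With \<open>h\<^sub>i\<^sub>j g\<^sup>j\<^sup>k m\<^sub>k = m\<^sub>i\<close> and \<open>g\<^sup>i\<^sup>j h\<^sub>i\<^sub>j = n - 1\<close>
  this gives \<open>c'\<^sub>i = c\<^sub>i + (n + 1) m\<^sub>i / (2 L')\<close>, i.e. \<open>M'\<^sub>i = M\<^sub>i + m\<^sub>i / (2 L')\<close>, and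
  in \<open>K'\<close> the \<open>m\<close>-terms cancel, leaving \<open>K' = (\<tau> / L') L K = \<phi> K\<close>.\<close>

section \<open>Partial derivatives away from the origin\<close>

lemma iter_pd_snoc: "iter_pd (is @ [i]) f = iter_pd is (pd i f)"
  by (induction "is") auto

lemma smooth_off0_pd: "smooth_off0 f \<Longrightarrow> smooth_off0 (pd i f)"
  unfolding smooth_off0_def by (metis iter_pd_snoc)

lemma smooth_off0_differentiable_on: "smooth_off0 f \<Longrightarrow> f differentiable_on UNIV - {0}"
  unfolding smooth_off0_def by (metis iter_pd.simps(1))

lemma differentiable_on_off0_at:
  "f differentiable_on UNIV - {0} \<Longrightarrow> z \<noteq> 0 \<Longrightarrow> f differentiable (at z)"
  by (simp add: differentiable_on_eq_differentiable_at open_Diff)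

lemma smooth_off0_differentiable: "smooth_off0 f \<Longrightarrow> z \<noteq> 0 \<Longrightarrow> f differentiable (at z)"
  by (simp add: differentiable_on_off0_at smooth_off0_differentiable_on)

lemma has_real_derivative_line:
  assumes "(f has_derivative D) (at y)"
  shows "((\<lambda>t. f (y + t *\<^sub>R v)) has_real_derivative D v) (at 0)"
proof -
  have "((\<lambda>t. y + t *\<^sub>R v) has_derivative (\<lambda>h. h *\<^sub>R v)) (at 0)"
    by (auto intro!: derivative_eq_intros)
  from has_derivative_compose[OF this] assms
  have "((\<lambda>t. f (y + t *\<^sub>R v)) has_derivative (\<lambda>h. D (h *\<^sub>R v))) (at 0)"
    by simp
  moreover have "(\<lambda>h. D (h *\<^sub>R v)) = (*) (D v)"
    using has_derivative_linear[OF assms] by (auto simp: linear_cmul)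
  ultimately show ?thesis unfolding has_field_derivative_def by simp
qed

lemma pd_has_derivative: "(f has_derivative D) (at y) \<Longrightarrow> pd i f y = D (axis i 1)"
  unfolding pd_def by (rule DERIV_imp_deriv[OF has_real_derivative_line])

lemma has_real_derivative_pd:
  assumes "f differentiable (at (y + s *\<^sub>R axis i 1))"
  shows "((\<lambda>t. f (y + t *\<^sub>R axis i 1)) has_real_derivative pd i f (y + s *\<^sub>R axis i 1)) (at s)"
proof -
  let ?y = "y + s *\<^sub>R axis i 1"
  obtain D where D: "(f has_derivative D) (at ?y)"
    using assms unfolding differentiable_def by blast
  have "((\<lambda>t. f (?y + t *\<^sub>R axis i 1)) has_real_derivative D (axis i 1)) (at (s - s))"
    using has_real_derivative_line[OF D] by simp
  moreover have "((\<lambda>t. t - s) has_real_derivative 1) (at s)"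
    by (auto intro!: derivative_eq_intros)
  ultimately have "((\<lambda>t. f (?y + (t - s) *\<^sub>R axis i 1)) has_real_derivative D (axis i 1) * 1) (at s)"
    by (rule DERIV_chain2)
  then show ?thesis
    by (simp add: pd_has_derivative[OF D] algebra_simps)
qed

lemma has_real_derivative_pd0:
  "f differentiable (at y) \<Longrightarrow> ((\<lambda>t. f (y + t *\<^sub>R axis i 1)) has_real_derivative pd i f y) (at 0)"
  using has_real_derivative_pd[of f y 0] by simp

lemma pd_eqI: "((\<lambda>t. f (y + t *\<^sub>R axis i 1)) has_real_derivative D) (at 0) \<Longrightarrow> pd i f y = D"
  unfolding pd_def by (rule DERIV_imp_deriv)

lemma eventually_line_ne0:
  fixes y :: "'a::real_normed_vector"
  shows "y \<noteq> 0 \<Longrightarrow> eventually (\<lambda>t. y + t *\<^sub>R v \<noteq> 0) (nhds (0::real))"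
  by (rule tendsto_imp_eventually_ne[of "\<lambda>t. y + t *\<^sub>R v" y])
    (auto intro!: tendsto_eq_intros filterlim_ident)

lemma pd_eqI_off0:
  assumes "y \<noteq> 0" and "(g has_real_derivative D) (at 0)"
    and "\<And>t. y + t *\<^sub>R axis i 1 \<noteq> 0 \<Longrightarrow> f (y + t *\<^sub>R axis i 1) = g t"
  shows "pd i f y = D"
proof -
  have "eventually (\<lambda>t. f (y + t *\<^sub>R axis i 1) = g t) (nhds 0)"
    using eventually_line_ne0[OF assms(1)] by eventually_elim (use assms(3) in auto)
  then have "pd i f y = deriv g 0"
    unfolding pd_def by (rule deriv_cong_ev) simp
  with assms(2) show ?thesis by (simp add: DERIV_imp_deriv)
qed

lemma pd_cong_off0:
  assumes "y \<noteq> 0" and "\<And>z. z \<noteq> 0 \<Longrightarrow> f z = g z"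
  shows "pd i f y = pd i g y"
proof -
  have "eventually (\<lambda>t. f (y + t *\<^sub>R axis i 1) = g (y + t *\<^sub>R axis i 1)) (nhds 0)"
    using eventually_line_ne0[OF assms(1)] by eventually_elim (use assms(2) in auto)
  then show ?thesis unfolding pd_def by (rule deriv_cong_ev) simp
qed

lemma pd_mult:
  assumes "f differentiable (at y)" and "g differentiable (at y)"
  shows "pd i (\<lambda>z. f z * g z) y = pd i f y * g y + f y * pd i g y"
  using DERIV_mult[OF has_real_derivative_pd0[OF assms(1), of i] has_real_derivative_pd0[OF assms(2), of i]]
  by (intro pd_eqI) (simp add: algebra_simps)

lemma pd_scale: "f differentiable (at y) \<Longrightarrow> pd i (\<lambda>z. c * f z) y = c * pd i f y"
  by (rule pd_eqI, rule DERIV_cmult[OF has_real_derivative_pd0])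

lemma pd_scale_add_const: "f differentiable (at y) \<Longrightarrow> pd i (\<lambda>z. c * f z + d) y = c * pd i f y"
  by (rule pd_eqI) (auto intro!: derivative_eq_intros has_real_derivative_pd0)

lemma pd_scale_add_inner:
  assumes "f differentiable (at y)"
  shows "pd i (\<lambda>z. c * f z + b \<bullet> z) y = c * pd i f y + b $ i"
proof (rule pd_eqI)
  have "b \<bullet> (y + t *\<^sub>R axis i 1) = b \<bullet> y + t * b $ i" for t
    by (simp add: inner_add_right inner_axis)
  then show "((\<lambda>t. c * f (y + t *\<^sub>R axis i 1) + b \<bullet> (y + t *\<^sub>R axis i 1))
      has_real_derivative c * pd i f y + b $ i) (at 0)"
    by (auto intro!: derivative_eq_intros has_real_derivative_pd0[OF assms])
qed

lemma fund_g_eq: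
  assumes "smooth_off0 F" and "y \<noteq> 0"
  shows "fund_g F i j y = pd i F y * pd j F y + F y * pd i (pd j F) y"
proof -
  have dF: "F differentiable (at z)" and dpF: "pd j F differentiable (at z)" if "z \<noteq> 0" for z
    using that assms(1) smooth_off0_pd by (auto intro: smooth_off0_differentiable)
  have "pd j (\<lambda>z. F z ^ 2) z = 2 * F z * pd j F z" if "z \<noteq> 0" for z
    using pd_mult[OF dF dF, OF that that, of j] by (simp add: power2_eq_square)
  then have "pd i (pd j (\<lambda>z. F z ^ 2)) y = pd i (\<lambda>z. (2 * F z) * pd j F z) y"
    by (intro pd_cong_off0[OF assms(2)]) simp
  also have "\<dots> = 2 * (pd i F y * pd j F y + F y * pd i (pd j F) y)"
    using pd_mult[of "\<lambda>z. 2 * F z" y "pd j F" i] pd_scale[OF dF[OF assms(2)], of i 2] dF dpF assms(2)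
    by (simp add: algebra_simps)
  finally show ?thesis unfolding fund_g_def by simp
qed

lemma h_ang_eq: "smooth_off0 F \<Longrightarrow> y \<noteq> 0 \<Longrightarrow> h_ang F i j y = F y * pd i (pd j F) y"
  by (simp add: h_ang_def l_vec_def fund_g_eq)

lemma cartan_eq:
  assumes "smooth_off0 F" and "y \<noteq> 0"
  shows "cartan F i j k y = 1/2 * (pd k (pd i F) y * pd j F y + pd i F y * pd k (pd j F) y
      + pd k F y * pd i (pd j F) y + F y * pd k (pd i (pd j F)) y)"
proof -
  have d: "F differentiable (at y)" "pd i F differentiable (at y)" "pd j F differentiable (at y)"
      "pd i (pd j F) differentiable (at y)"
    using assms smooth_off0_pd[OF smooth_off0_pd[OF assms(1)]] smooth_off0_pd[OF assms(1)]
    by (auto intro: smooth_off0_differentiable)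
  have "pd k (fund_g F i j) y = pd k (\<lambda>z. pd i F z * pd j F z + F z * pd i (pd j F) z) y"
    by (intro pd_cong_off0[OF assms(2)] fund_g_eq[OF assms(1)])
  also have "\<dots> = pd k (pd i F) y * pd j F y + pd i F y * pd k (pd j F) y
      + (pd k F y * pd i (pd j F) y + F y * pd k (pd i (pd j F)) y)"
    using DERIV_add[OF
        DERIV_mult[OF has_real_derivative_pd0[OF d(2), of k] has_real_derivative_pd0[OF d(3), of k]]
        DERIV_mult[OF has_real_derivative_pd0[OF d(1), of k] has_real_derivative_pd0[OF d(4), of k]]]
    by (intro pd_eqI) (simp add: algebra_simps)
  finally show ?thesis unfolding cartan_def by (simp add: algebra_simps)
qed

section \<open>Euler's theorem and symmetry of second derivatives\<close>

definition pos_homogeneous :: "real \<Rightarrow> (real^'n::finite \<Rightarrow> real) \<Rightarrow> bool" where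
  "pos_homogeneous r f \<longleftrightarrow> (\<forall>y t. y \<noteq> 0 \<longrightarrow> t > 0 \<longrightarrow> f (t *\<^sub>R y) = t powr r * f y)"

lemma pos_homogeneous_pd:
  fixes f :: "real^'n::finite \<Rightarrow> real"
  assumes hom: "pos_homogeneous r f" and diff: "f differentiable_on UNIV - {0}"
  shows "pos_homogeneous (r - 1) (pd i f)"
  unfolding pos_homogeneous_def
proof (intro allI impI)
  fix y :: "real^'n" and t :: real
  assume y: "y \<noteq> 0" and t: "t > 0"
  have "((\<lambda>s. f (y + s *\<^sub>R axis i 1)) has_real_derivative pd i f y) (at (0 / t))"
    using has_real_derivative_pd0[OF differentiable_on_off0_at[OF diff y]] by simp
  moreover have "((\<lambda>s. s / t) has_real_derivative 1 / t) (at 0)"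
    using t by (auto intro!: derivative_eq_intros)
  ultimately have "((\<lambda>s. t powr r * f (y + (s / t) *\<^sub>R axis i 1)) has_real_derivative
      t powr r * (pd i f y * (1 / t))) (at 0)"
    by (intro DERIV_cmult DERIV_chain2)
  moreover have "t powr r * (pd i f y * (1 / t)) = t powr (r - 1) * pd i f y"
    using t by (simp add: powr_diff)
  ultimately have d: "((\<lambda>s. t powr r * f (y + (s / t) *\<^sub>R axis i 1)) has_real_derivative
      t powr (r - 1) * pd i f y) (at 0)"
    by simp
  show "pd i f (t *\<^sub>R y) = t powr (r - 1) * pd i f y"
  proof (rule pd_eqI_off0[OF _ d])
    fix s
    have "t *\<^sub>R y + s *\<^sub>R axis i 1 = t *\<^sub>R (y + (s / t) *\<^sub>R axis i 1)"
      using t by (simp add: scaleR_add_right)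
    moreover assume "t *\<^sub>R y + s *\<^sub>R axis i 1 \<noteq> 0"
    ultimately show "f (t *\<^sub>R y + s *\<^sub>R axis i 1) = t powr r * f (y + (s / t) *\<^sub>R axis i 1)"
      using hom t unfolding pos_homogeneous_def by auto
  qed (use t y in simp)
qed

lemma euler_pos_homogeneous:
  fixes f :: "real^'n::finite \<Rightarrow> real"
  assumes hom: "pos_homogeneous r f" and diff: "f differentiable (at y)" and y: "y \<noteq> 0"
  shows "(\<Sum>k\<in>UNIV. y $ k * pd k f y) = r * f y"
proof -
  obtain D where D: "(f has_derivative D) (at y)"
    using diff unfolding differentiable_def by blast
  have "D y = D (\<Sum>k\<in>UNIV. y $ k *\<^sub>R axis k 1)"
    using basis_expansion[of y] by (simp add: scalar_mult_eq_scaleR)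
  also have "\<dots> = (\<Sum>k\<in>UNIV. y $ k * pd k f y)"
    using has_derivative_linear[OF D] by (simp add: linear_sum linear_cmul pd_has_derivative[OF D])
  finally have Dy: "D y = (\<Sum>k\<in>UNIV. y $ k * pd k f y)" .
  have "((\<lambda>s. (1 + s) powr r * f y) has_real_derivative r * f y) (at 0)"
    by (auto intro!: derivative_eq_intros)
  then have "((\<lambda>s. f (y + s *\<^sub>R y)) has_real_derivative r * f y) (at 0)"
  proof (rule has_field_derivative_transform_within_open[of _ _ _ "{-1<..}"])
    fix s :: real
    assume "s \<in> {-1<..}"
    moreover have "y + s *\<^sub>R y = (1 + s) *\<^sub>R y"
      by (simp add: algebra_simps)
    ultimately show "(1 + s) powr r * f y = f (y + s *\<^sub>R y)"
      using hom y unfolding pos_homogeneous_def by simp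
  qed auto
  with has_real_derivative_line[OF D, of y] have "D y = r * f y"
    by (rule DERIV_unique)
  with Dy show ?thesis by simp
qed

lemma norm_axis_combination_le:
  "norm (s *\<^sub>R axis a 1 + u *\<^sub>R axis b 1 :: real^'n::finite) \<le> \<bar>s\<bar> + \<bar>u\<bar>"
  using norm_triangle_ineq[of "s *\<^sub>R axis a 1" "u *\<^sub>R axis b 1 :: real^'n"] by simp

lemma second_difference_mvt:
  fixes f :: "real^'n::finite \<Rightarrow> real"
  assumes f: "f differentiable_on UNIV - {0}" and fa: "pd a f differentiable_on UNIV - {0}"
    and h: "0 < h" "2 * h < norm y"
  obtains \<xi> \<eta> where "0 < \<xi>" "\<xi> < h" "0 < \<eta>" "\<eta> < h"
    and "f (y + h *\<^sub>R axis a 1 + h *\<^sub>R axis b 1) - f (y + h *\<^sub>R axis a 1)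
        - f (y + h *\<^sub>R axis b 1) + f y
      = h\<^sup>2 * pd b (pd a f) (y + \<xi> *\<^sub>R axis a 1 + \<eta> *\<^sub>R axis b 1)"
proof -
  have ne: "y + s *\<^sub>R axis a 1 + u *\<^sub>R axis b 1 \<noteq> 0" if "0 \<le> s" "s \<le> h" "0 \<le> u" "u \<le> h" for s u
  proof
    assume "y + s *\<^sub>R axis a 1 + u *\<^sub>R axis b 1 = 0"
    then have "s *\<^sub>R axis a 1 + u *\<^sub>R axis b 1 = - y"
      by (simp add: add_eq_0_iff add.assoc)
    then have "norm y = norm (s *\<^sub>R axis a 1 + u *\<^sub>R axis b 1 :: real^'n)"
      by simp
    with norm_axis_combination_le[of s a u b] that h show False by simp
  qed
  have diff_a: "((\<lambda>s. f (w + s *\<^sub>R axis a 1)) has_real_derivative pd a f (w + s *\<^sub>R axis a 1)) (at s)"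
    if "w + s *\<^sub>R axis a 1 \<noteq> 0" for w s
    using has_real_derivative_pd[OF differentiable_on_off0_at[OF f that]] .
  define \<phi> where "\<phi> s = f (y + h *\<^sub>R axis b 1 + s *\<^sub>R axis a 1) - f (y + s *\<^sub>R axis a 1)" for s
  have "(\<phi> has_real_derivative pd a f (y + h *\<^sub>R axis b 1 + s *\<^sub>R axis a 1)
      - pd a f (y + s *\<^sub>R axis a 1)) (at s)" if "0 \<le> s" "s \<le> h" for s
    unfolding \<phi>_def using ne[OF that, of h] ne[OF that, of 0] h
    by (intro DERIV_diff diff_a) (simp_all add: add_ac)
  from MVT2[OF h(1) this] obtain \<xi> where \<xi>: "0 < \<xi>" "\<xi> < h"
    and \<phi>_diff: "\<phi> h - \<phi> 0 = (h - 0) * (pd a f (y + h *\<^sub>R axis b 1 + \<xi> *\<^sub>R axis a 1)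
      - pd a f (y + \<xi> *\<^sub>R axis a 1))"
    by blast
  define \<psi> where "\<psi> u = pd a f (y + \<xi> *\<^sub>R axis a 1 + u *\<^sub>R axis b 1)" for u
  have "(\<psi> has_real_derivative pd b (pd a f) (y + \<xi> *\<^sub>R axis a 1 + u *\<^sub>R axis b 1)) (at u)"
    if "0 \<le> u" "u \<le> h" for u
    unfolding \<psi>_def using \<xi> that
    by (intro has_real_derivative_pd differentiable_on_off0_at[OF fa] ne) simp_all
  from MVT2[OF h(1) this] obtain \<eta> where \<eta>: "0 < \<eta>" "\<eta> < h"
    and \<psi>_diff: "\<psi> h - \<psi> 0 = (h - 0) * pd b (pd a f) (y + \<xi> *\<^sub>R axis a 1 + \<eta> *\<^sub>R axis b 1)"
    by blast
  have "f (y + h *\<^sub>R axis a 1 + h *\<^sub>R axis b 1) - f (y + h *\<^sub>R axis a 1)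
        - f (y + h *\<^sub>R axis b 1) + f y = h * (\<psi> h - \<psi> 0)"
    using \<phi>_diff unfolding \<phi>_def \<psi>_def by (simp add: add_ac)
  with \<psi>_diff \<xi> \<eta> that show ?thesis by (simp add: power2_eq_square)
qed

lemma pd_commute_continuous:
  fixes f :: "real^'n::finite \<Rightarrow> real"
  assumes f: "f differentiable_on UNIV - {0}"
    and fa: "pd a f differentiable_on UNIV - {0}" and fb: "pd b f differentiable_on UNIV - {0}"
    and cont_ab: "continuous (at y) (pd b (pd a f))" and cont_ba: "continuous (at y) (pd a (pd b f))"
    and y: "y \<noteq> 0"
  shows "pd b (pd a f) y = pd a (pd b f) y"
proof (rule ccontr)
  let ?F = "pd b (pd a f)" and ?G = "pd a (pd b f)"
  define \<epsilon> where "\<epsilon> = \<bar>?F y - ?G y\<bar> / 2"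
  assume "?F y \<noteq> ?G y"
  then have "\<epsilon> > 0" unfolding \<epsilon>_def by simp
  then obtain d1 d2 where "d1 > 0" "d2 > 0"
    and d1: "\<And>z. dist z y < d1 \<Longrightarrow> dist (?F z) (?F y) < \<epsilon>"
    and d2: "\<And>z. dist z y < d2 \<Longrightarrow> dist (?G z) (?G y) < \<epsilon>"
    using cont_ab cont_ba unfolding continuous_at_eps_delta by metis
  define h where "h = min (min d1 d2) (norm y) / 4"
  have h: "0 < h" "2 * h < norm y" "2 * h < d1" "2 * h < d2"
    using \<open>d1 > 0\<close> \<open>d2 > 0\<close> y unfolding h_def by (auto simp: min_def)
  have near: "dist (y + s *\<^sub>R axis c 1 + u *\<^sub>R axis e 1) y < 2 * h"
    if "0 < s" "s < h" "0 < u" "u < h" for s u c e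
    using norm_axis_combination_le[of s c u e] that by (simp add: dist_norm)
  obtain \<xi> \<eta> where "0 < \<xi>" "\<xi> < h" "0 < \<eta>" "\<eta> < h"
    and E1: "f (y + h *\<^sub>R axis a 1 + h *\<^sub>R axis b 1) - f (y + h *\<^sub>R axis a 1)
        - f (y + h *\<^sub>R axis b 1) + f y = h\<^sup>2 * ?F (y + \<xi> *\<^sub>R axis a 1 + \<eta> *\<^sub>R axis b 1)"
    using second_difference_mvt[OF f fa h(1,2)] by blast
  obtain \<xi>' \<eta>' where "0 < \<xi>'" "\<xi>' < h" "0 < \<eta>'" "\<eta>' < h"
    and E2: "f (y + h *\<^sub>R axis b 1 + h *\<^sub>R axis a 1) - f (y + h *\<^sub>R axis b 1)
        - f (y + h *\<^sub>R axis a 1) + f y = h\<^sup>2 * ?G (y + \<xi>' *\<^sub>R axis b 1 + \<eta>' *\<^sub>R axis a 1)"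
    using second_difference_mvt[OF f fb h(1,2)] by blast
  have "y + h *\<^sub>R axis b 1 + h *\<^sub>R axis a 1 = y + h *\<^sub>R axis a 1 + h *\<^sub>R axis b 1"
    by (simp add: algebra_simps)
  with E1 E2 h(1)
  have "?F (y + \<xi> *\<^sub>R axis a 1 + \<eta> *\<^sub>R axis b 1) = ?G (y + \<xi>' *\<^sub>R axis b 1 + \<eta>' *\<^sub>R axis a 1)"
    by (simp add: algebra_simps)
  moreover have "dist (?F (y + \<xi> *\<^sub>R axis a 1 + \<eta> *\<^sub>R axis b 1)) (?F y) < \<epsilon>"
    using d1 near[of \<xi> \<eta> a b] h \<open>0 < \<xi>\<close> \<open>\<xi> < h\<close> \<open>0 < \<eta>\<close> \<open>\<eta> < h\<close> by simp
  moreover have "dist (?G (y + \<xi>' *\<^sub>R axis b 1 + \<eta>' *\<^sub>R axis a 1)) (?G y) < \<epsilon>"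
    using d2 near[of \<xi>' \<eta>' b a] h \<open>0 < \<xi>'\<close> \<open>\<xi>' < h\<close> \<open>0 < \<eta>'\<close> \<open>\<eta>' < h\<close> by simp
  ultimately show False
    unfolding \<epsilon>_def dist_real_def by (simp add: abs_if split: if_splits)
qed

lemma pd_commute:
  "smooth_off0 f \<Longrightarrow> y \<noteq> 0 \<Longrightarrow> pd b (pd a f) y = pd a (pd b f) y"
  by (intro pd_commute_continuous smooth_off0_differentiable_on smooth_off0_pd
      differentiable_imp_continuous_within smooth_off0_differentiable)

section \<open>Inverse matrices in index notation\<close>

lemma matrix_inv_pos_def:
  fixes A :: "real^'n::finite^'n"
  assumes pos: "\<And>v. v \<noteq> 0 \<Longrightarrow> v \<bullet> (A *v v) > 0"
  shows "A ** matrix_inv A = mat 1" and "matrix_inv A ** A = mat 1"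
proof -
  have "\<forall>v. A *v v = 0 \<longrightarrow> v = 0"
    using pos by (metis inner_zero_right less_irrefl)
  then obtain B where "B ** A = mat 1"
    using matrix_left_invertible_ker by blast
  then have "\<exists>B. A ** B = mat 1 \<and> B ** A = mat 1"
    using matrix_left_right_inverse by blast
  then have "A ** matrix_inv A = mat 1 \<and> matrix_inv A ** A = mat 1"
    unfolding matrix_inv_def by (rule someI_ex)
  then show "A ** matrix_inv A = mat 1" and "matrix_inv A ** A = mat 1"
    by auto
qed

lemma transpose_matrix_inv_symmetric:
  fixes A :: "real^'n::finite^'n"
  assumes "transpose A = A" and "A ** matrix_inv A = mat 1"
  shows "transpose (matrix_inv A) = matrix_inv A"
proof -
  let ?B = "matrix_inv A"
  have "?B ** A = mat 1"
    using assms(2) matrix_left_right_inverse by blast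
  then have "A ** transpose ?B = mat 1"
    by (metis assms(1) matrix_transpose_mul transpose_mat)
  then have "?B = ?B ** (A ** transpose ?B)"
    by simp
  also have "\<dots> = transpose ?B"
    by (simp add: matrix_mul_assoc \<open>?B ** A = mat 1\<close>)
  finally show ?thesis
    by simp
qed

lemma sum_kronecker_left:
  "(\<Sum>c\<in>UNIV. (if j = c then 1 else 0) * f c) = (f (j::'n::finite) :: 'a::comm_semiring_1)"
  by (simp add: if_distrib[of "\<lambda>x. x * _"] cong: if_cong)

lemma sum_kronecker_right:
  "(\<Sum>c\<in>UNIV. f c * (if c = k then 1 else 0)) = (f (k::'n::finite) :: 'a::comm_semiring_1)"
  by (simp add: if_distrib[of "\<lambda>x. _ * x"] cong: if_cong)

lemma sum_mult_sum_swap: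
  "(\<Sum>k\<in>A. a k * (\<Sum>j\<in>B. b k j * x j)) = (\<Sum>j\<in>B. (\<Sum>k\<in>A. a k * b k j) * (x j :: 'a::comm_semiring_1))"
proof -
  have "(\<Sum>k\<in>A. a k * (\<Sum>j\<in>B. b k j * x j)) = (\<Sum>k\<in>A. \<Sum>j\<in>B. a k * b k j * x j)"
    by (simp add: sum_distrib_left mult.assoc)
  also have "\<dots> = (\<Sum>j\<in>B. \<Sum>k\<in>A. a k * b k j * x j)"
    by (rule sum.swap)
  finally show ?thesis
    by (simp add: sum_distrib_right)
qed

lemma inverse_update_rank_two:
  fixes g g' G G' :: "'n::finite \<Rightarrow> 'n \<Rightarrow> real" and p q :: "'n \<Rightarrow> real"
  assumes G'_g': "\<And>j c. (\<Sum>a\<in>UNIV. G' j a * g' a c) = (if j = c then 1 else 0)"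
    and g_G: "\<And>a k. (\<Sum>c\<in>UNIV. g a c * G c k) = (if a = k then 1 else 0)"
    and update: "\<And>a c. \<tau> * g a c = g' a c - p a * p c + \<tau> * (q a * q c)"
  shows "\<tau> * G' j k = G j k - (\<Sum>a\<in>UNIV. G' j a * p a) * (\<Sum>c\<in>UNIV. p c * G c k)
      + \<tau> * ((\<Sum>a\<in>UNIV. G' j a * q a) * (\<Sum>c\<in>UNIV. q c * G c k))"
proof -
  have "\<tau> * G' j k = \<tau> * (\<Sum>a\<in>UNIV. G' j a * (\<Sum>c\<in>UNIV. g a c * G c k))"
    by (simp add: g_G sum_kronecker_right)
  also have "\<dots> = (\<Sum>a\<in>UNIV. \<Sum>c\<in>UNIV. G' j a * (\<tau> * g a c) * G c k)"
    by (simp add: sum_distrib_left algebra_simps)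
  also have "\<dots> = (\<Sum>a\<in>UNIV. \<Sum>c\<in>UNIV. G' j a * g' a c * G c k)
      - (\<Sum>a\<in>UNIV. \<Sum>c\<in>UNIV. (G' j a * p a) * (p c * G c k))
      + \<tau> * (\<Sum>a\<in>UNIV. \<Sum>c\<in>UNIV. (G' j a * q a) * (q c * G c k))"
    by (simp add: update algebra_simps sum.distrib sum_subtractf sum_distrib_left)
  also have "(\<Sum>a\<in>UNIV. \<Sum>c\<in>UNIV. G' j a * g' a c * G c k) = G j k"
    by (subst sum.swap) (simp add: sum_distrib_right[symmetric] G'_g' sum_kronecker_left)
  also have "(\<Sum>a\<in>UNIV. \<Sum>c\<in>UNIV. (G' j a * p a) * (p c * G c k))
      = (\<Sum>a\<in>UNIV. G' j a * p a) * (\<Sum>c\<in>UNIV. p c * G c k)"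
    by (rule sum_product[symmetric])
  also have "(\<Sum>a\<in>UNIV. \<Sum>c\<in>UNIV. (G' j a * q a) * (q c * G c k))
      = (\<Sum>a\<in>UNIV. G' j a * q a) * (\<Sum>c\<in>UNIV. q c * G c k)"
    by (rule sum_product[symmetric])
  finally show ?thesis .
qed

lemma sum_contract_annihilated:
  fixes A M :: "'n::finite \<Rightarrow> 'n \<Rightarrow> real" and y v w :: "'n \<Rightarrow> real"
  assumes "\<And>j. (\<Sum>k\<in>UNIV. A j k * y k) = 0" and "\<And>k. (\<Sum>j\<in>UNIV. y j * A j k) = 0"
  shows "(\<Sum>j\<in>UNIV. \<Sum>k\<in>UNIV. (M j k + y j * v k + w j * y k) * A j k)
    = (\<Sum>j\<in>UNIV. \<Sum>k\<in>UNIV. M j k * A j k)"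
proof -
  have "(\<Sum>j\<in>UNIV. \<Sum>k\<in>UNIV. y j * v k * A j k) = (\<Sum>k\<in>UNIV. v k * (\<Sum>j\<in>UNIV. y j * A j k))"
    by (subst sum.swap) (simp add: sum_distrib_left algebra_simps)
  moreover have "(\<Sum>j\<in>UNIV. \<Sum>k\<in>UNIV. w j * y k * A j k) = (\<Sum>j\<in>UNIV. w j * (\<Sum>k\<in>UNIV. A j k * y k))"
    by (simp add: sum_distrib_left algebra_simps)
  ultimately show ?thesis
    using assms by (simp add: distrib_right sum.distrib)
qed

section \<open>Finsler metrics\<close>

locale finsler_metric =
  fixes L :: "real^'n::finite \<Rightarrow> real"
  assumes finsler: "finsler L"
begin

lemma smooth: "smooth_off0 L"
  using finsler unfolding finsler_def by blast

lemma pos: "y \<noteq> 0 \<Longrightarrow> L y > 0"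
  using finsler unfolding finsler_def by blast

lemma differentiable_derivs:
  assumes "z \<noteq> 0"
  shows "L differentiable (at z)" and "pd i L differentiable (at z)"
    and "pd i (pd j L) differentiable (at z)"
  using assms smooth smooth_off0_pd[OF smooth] smooth_off0_pd[OF smooth_off0_pd[OF smooth]]
  by (auto intro: smooth_off0_differentiable)

lemma pos_homogeneous_L: "pos_homogeneous 1 L"
  using finsler unfolding finsler_def pos_homogeneous_def by auto

lemma pos_homogeneous_pd1: "pos_homogeneous 0 (pd i L)"
  using pos_homogeneous_pd[OF pos_homogeneous_L smooth_off0_differentiable_on[OF smooth]] by simp

lemma pos_homogeneous_pd2: "pos_homogeneous (-1) (pd i (pd j L))"
  using pos_homogeneous_pd[OF pos_homogeneous_pd1 smooth_off0_differentiable_on[OF smooth_off0_pd[OF smooth]]]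
  by simp

lemma euler: "y \<noteq> 0 \<Longrightarrow> (\<Sum>k\<in>UNIV. y $ k * pd k L y) = L y"
  using euler_pos_homogeneous[OF pos_homogeneous_L differentiable_derivs(1)] by simp

lemma euler_pd: "y \<noteq> 0 \<Longrightarrow> (\<Sum>k\<in>UNIV. y $ k * pd k (pd i L) y) = 0"
  using euler_pos_homogeneous[OF pos_homogeneous_pd1 differentiable_derivs(2)] by simp

lemma euler_pd2: "y \<noteq> 0 \<Longrightarrow> (\<Sum>k\<in>UNIV. y $ k * pd k (pd i (pd j L)) y) = - pd i (pd j L) y"
  using euler_pos_homogeneous[OF pos_homogeneous_pd2 differentiable_derivs(3)] by simp

lemma pd2_commute: "y \<noteq> 0 \<Longrightarrow> pd a (pd b L) y = pd b (pd a L) y"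
  by (rule pd_commute[OF smooth])

lemma pd3_commute_outer: "y \<noteq> 0 \<Longrightarrow> pd a (pd b (pd c L)) y = pd b (pd a (pd c L)) y"
  by (rule pd_commute[OF smooth_off0_pd[OF smooth]])

lemma pd3_commute_inner: "y \<noteq> 0 \<Longrightarrow> pd a (pd b (pd c L)) y = pd a (pd c (pd b L)) y"
  by (rule pd_cong_off0) (simp_all add: pd2_commute)

lemma euler_pd_inner: "y \<noteq> 0 \<Longrightarrow> (\<Sum>k\<in>UNIV. y $ k * pd i (pd k L) y) = 0"
  using euler_pd[of y i] pd2_commute[of y i] by simp

lemma fund_g_sym: "y \<noteq> 0 \<Longrightarrow> fund_g L a c y = fund_g L c a y"
  by (simp add: fund_g_eq[OF smooth] pd2_commute)

lemma h_ang_sym: "y \<noteq> 0 \<Longrightarrow> h_ang L a c y = h_ang L c a y"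
  by (simp add: h_ang_eq[OF smooth] pd2_commute)

lemma fund_g_y:
  assumes "y \<noteq> 0"
  shows "(\<Sum>j\<in>UNIV. fund_g L k j y * y $ j) = L y * pd k L y"
proof -
  have "(\<Sum>j\<in>UNIV. fund_g L k j y * y $ j)
      = pd k L y * (\<Sum>j\<in>UNIV. y $ j * pd j L y) + L y * (\<Sum>j\<in>UNIV. y $ j * pd k (pd j L) y)"
    by (simp add: fund_g_eq[OF smooth assms] sum.distrib sum_distrib_left algebra_simps)
  with assms show ?thesis
    by (simp add: euler euler_pd_inner)
qed

abbreviation fund_g_matrix :: "real^'n \<Rightarrow> real^'n^'n" where
  "fund_g_matrix y \<equiv> \<chi> a b. fund_g L a b y"

lemma fund_g_matrix_pos_def:
  assumes "y \<noteq> 0" and "v \<noteq> 0"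
  shows "v \<bullet> (fund_g_matrix y *v v) > 0"
proof -
  have "v \<bullet> (fund_g_matrix y *v v) = (\<Sum>i\<in>UNIV. \<Sum>j\<in>UNIV. fund_g L i j y * v $ i * v $ j)"
    by (simp add: inner_vec_def matrix_vector_mult_def sum_distrib_left algebra_simps)
  with finsler assms show ?thesis
    unfolding finsler_def by simp
qed

lemma fund_g_matrix_inverse:
  assumes "y \<noteq> 0"
  shows "fund_g_matrix y ** matrix_inv (fund_g_matrix y) = mat 1"
    and "matrix_inv (fund_g_matrix y) ** fund_g_matrix y = mat 1"
  using matrix_inv_pos_def[of "fund_g_matrix y"] fund_g_matrix_pos_def[OF assms] by auto

lemma fund_g_ginv: "y \<noteq> 0 \<Longrightarrow> (\<Sum>k\<in>UNIV. fund_g L a k y * fund_ginv L k c y) = (if a = c then 1 else 0)"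
  using fund_g_matrix_inverse(1)[of y]
  by (auto simp: fund_ginv_def vec_eq_iff matrix_matrix_mult_def mat_def)

lemma fund_ginv_g: "y \<noteq> 0 \<Longrightarrow> (\<Sum>k\<in>UNIV. fund_ginv L a k y * fund_g L k c y) = (if a = c then 1 else 0)"
  using fund_g_matrix_inverse(2)[of y]
  by (auto simp: fund_ginv_def vec_eq_iff matrix_matrix_mult_def mat_def)

lemma fund_ginv_sym:
  assumes "y \<noteq> 0"
  shows "fund_ginv L a c y = fund_ginv L c a y"
proof -
  have "transpose (fund_g_matrix y) = fund_g_matrix y"
    using fund_g_sym[OF assms] by (simp add: transpose_def vec_eq_iff)
  note inv_sym = transpose_matrix_inv_symmetric[OF this fund_g_matrix_inverse(1)[OF assms]]
  have "transpose (matrix_inv (fund_g_matrix y)) $ c $ a = matrix_inv (fund_g_matrix y) $ c $ a"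
    by (simp only: inv_sym)
  then show ?thesis
    unfolding fund_ginv_def by (simp add: transpose_def)
qed

lemma fund_ginv_l:
  assumes "y \<noteq> 0"
  shows "(\<Sum>k\<in>UNIV. fund_ginv L a k y * pd k L y) = y $ a / L y"
proof -
  have "L y * (\<Sum>k\<in>UNIV. fund_ginv L a k y * pd k L y)
      = (\<Sum>k\<in>UNIV. fund_ginv L a k y * (\<Sum>j\<in>UNIV. fund_g L k j y * y $ j))"
    by (simp add: fund_g_y[OF assms] sum_distrib_left mult.left_commute)
  also have "\<dots> = (\<Sum>j\<in>UNIV. (\<Sum>k\<in>UNIV. fund_ginv L a k y * fund_g L k j y) * y $ j)"
    by (rule sum_mult_sum_swap)
  also have "\<dots> = y $ a"
    by (simp add: fund_ginv_g[OF assms] sum_kronecker_left)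
  finally show ?thesis
    using pos[OF assms] by (simp add: field_simps)
qed

lemma l_fund_ginv: "y \<noteq> 0 \<Longrightarrow> (\<Sum>j\<in>UNIV. pd j L y * fund_ginv L j c y) = y $ c / L y"
  using fund_ginv_l[of y c] by (simp add: fund_ginv_sym[of y _ c] mult.commute)

lemma h_ang_ginv_orthogonal:
  assumes y: "y \<noteq> 0" and orth: "(\<Sum>k\<in>UNIV. y $ k * m k) = 0"
  shows "(\<Sum>j\<in>UNIV. h_ang L i j y * (\<Sum>k\<in>UNIV. fund_ginv L j k y * m k)) = m i"
proof -
  define w where "w j = (\<Sum>k\<in>UNIV. fund_ginv L j k y * m k)" for j
  have "(\<Sum>j\<in>UNIV. fund_g L i j y * w j) = m i"
    unfolding w_def by (simp add: sum_mult_sum_swap fund_g_ginv[OF y] sum_kronecker_left)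
  moreover have "(\<Sum>j\<in>UNIV. pd j L y * w j) = 0"
    unfolding w_def using orth
    by (simp add: sum_mult_sum_swap l_fund_ginv[OF y] sum_divide_distrib[symmetric])
  moreover have "(\<Sum>j\<in>UNIV. h_ang L i j y * w j)
      = (\<Sum>j\<in>UNIV. fund_g L i j y * w j) - pd i L y * (\<Sum>j\<in>UNIV. pd j L y * w j)"
    by (simp add: h_ang_def l_vec_def left_diff_distrib sum_subtractf sum_distrib_left mult.assoc)
  ultimately show ?thesis
    unfolding w_def by simp
qed

lemma trace_ginv_h_ang:
  assumes y: "y \<noteq> 0"
  shows "(\<Sum>j\<in>UNIV. \<Sum>k\<in>UNIV. fund_ginv L j k y * h_ang L k j y) = real CARD('n) - 1"
proof -
  have "(\<Sum>j\<in>UNIV. \<Sum>k\<in>UNIV. fund_ginv L j k y * h_ang L k j y)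
      = (\<Sum>j\<in>UNIV. (\<Sum>k\<in>UNIV. fund_ginv L j k y * fund_g L k j y)
          - (\<Sum>k\<in>UNIV. fund_ginv L j k y * pd k L y) * pd j L y)"
    by (simp add: h_ang_def l_vec_def right_diff_distrib sum_subtractf sum_distrib_right mult.assoc)
  also have "\<dots> = (\<Sum>j\<in>UNIV. 1 - y $ j * pd j L y / L y)"
    by (simp add: fund_ginv_g[OF y] fund_ginv_l[OF y])
  also have "\<dots> = real CARD('n) - 1"
    using euler[OF y] pos[OF y] by (simp add: sum_subtractf sum_divide_distrib[symmetric])
  finally show ?thesis .
qed

lemma cartan_y: "y \<noteq> 0 \<Longrightarrow> (\<Sum>k\<in>UNIV. cartan L i j k y * y $ k) = 0"
proof -
  assume y: "y \<noteq> 0"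
  have "(\<Sum>k\<in>UNIV. cartan L i j k y * y $ k) = 1/2 * (pd j L y * (\<Sum>k\<in>UNIV. y $ k * pd k (pd i L) y)
      + pd i L y * (\<Sum>k\<in>UNIV. y $ k * pd k (pd j L) y)
      + pd i (pd j L) y * (\<Sum>k\<in>UNIV. y $ k * pd k L y)
      + L y * (\<Sum>k\<in>UNIV. y $ k * pd k (pd i (pd j L)) y))"
    by (simp add: cartan_eq[OF smooth y] sum.distrib sum_distrib_left algebra_simps)
  with y show ?thesis
    by (simp add: euler euler_pd euler_pd2)
qed

lemma cartan_swap:
  assumes y: "y \<noteq> 0"
  shows "cartan L i j k y = cartan L i k j y"
proof -
  have "pd k (pd i (pd j L)) y = pd j (pd i (pd k L)) y"
    using pd3_commute_inner[OF y, of k i j] pd3_commute_outer[OF y, of k j i]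
      pd3_commute_inner[OF y, of j k i] by simp
  then show ?thesis
    unfolding cartan_eq[OF smooth y] pd2_commute[OF y, of k i] pd2_commute[OF y, of k j]
      pd2_commute[OF y, of i j]
    by (simp add: algebra_simps)
qed

lemma y_cartan: "y \<noteq> 0 \<Longrightarrow> (\<Sum>j\<in>UNIV. y $ j * cartan L i j k y) = 0"
  using cartan_y[of y i k] by (simp add: cartan_swap[of y i _ k] mult.commute)

end

section \<open>The conformal \<open>\<beta>\<close>-change\<close>

definition m_vec :: "(real^'n::finite \<Rightarrow> real) \<Rightarrow> real^'n \<Rightarrow> 'n \<Rightarrow> real^'n \<Rightarrow> real" where
  "m_vec L b i y = b $ i - (b \<bullet> y) / L y * pd i L y"

locale conformal_beta_change = finsler_metric L for L :: "real^'n::finite \<Rightarrow> real" +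
  fixes \<phi> :: real and b :: "real^'n"
  assumes \<phi>_pos: "\<phi> > 0" and finsler_changed: "finsler (\<lambda>y. \<phi> * L y + b \<bullet> y)"
begin

abbreviation L' :: "real^'n \<Rightarrow> real" where
  "L' \<equiv> \<lambda>y. \<phi> * L y + b \<bullet> y"

sublocale changed: finsler_metric L'
  by (rule finsler_metric.intro, rule finsler_changed)

lemma pd_changed: "z \<noteq> 0 \<Longrightarrow> pd i L' z = \<phi> * pd i L z + b $ i"
  by (rule pd_scale_add_inner[OF differentiable_derivs(1)])

lemma pd2_changed: "z \<noteq> 0 \<Longrightarrow> pd a (pd c L') z = \<phi> * pd a (pd c L) z"
proof -
  assume z: "z \<noteq> 0"
  have "pd a (pd c L') z = pd a (\<lambda>w. \<phi> * pd c L w + b $ c) z"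
    by (rule pd_cong_off0[OF z]) (rule pd_changed)
  also have "\<dots> = \<phi> * pd a (pd c L) z"
    by (rule pd_scale_add_const[OF differentiable_derivs(2)[OF z]])
  finally show ?thesis .
qed

lemma pd3_changed: "y \<noteq> 0 \<Longrightarrow> pd a (pd c (pd e L')) y = \<phi> * pd a (pd c (pd e L)) y"
proof -
  assume y: "y \<noteq> 0"
  have "pd a (pd c (pd e L')) y = pd a (\<lambda>w. \<phi> * pd c (pd e L) w) y"
    by (rule pd_cong_off0[OF y]) (rule pd2_changed)
  also have "\<dots> = \<phi> * pd a (pd c (pd e L)) y"
    by (rule pd_scale[OF differentiable_derivs(3)[OF y]])
  finally show ?thesis .
qed

lemma h_ang_changed: "y \<noteq> 0 \<Longrightarrow> h_ang L' a c y = \<phi> * L' y / L y * h_ang L a c y"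
  using pos[of y] by (simp add: h_ang_eq[OF smooth] h_ang_eq[OF changed.smooth] pd2_changed)

lemma fund_g_changed:
  assumes "y \<noteq> 0"
  shows "\<phi> * L' y / L y * fund_g L a c y
    = fund_g L' a c y - pd a L' y * pd c L' y + \<phi> * L' y / L y * (pd a L y * pd c L y)"
proof -
  have "fund_g L' a c y - pd a L' y * pd c L' y
      = \<phi> * L' y / L y * fund_g L a c y - \<phi> * L' y / L y * (pd a L y * pd c L y)"
    using h_ang_changed[OF assms, of a c] unfolding h_ang_def l_vec_def right_diff_distrib .
  then show ?thesis
    by linarith
qed

lemma m_vec_orthogonal:
  assumes y: "y \<noteq> 0"
  shows "(\<Sum>k\<in>UNIV. y $ k * m_vec L b k y) = 0"
proof -
  have "(\<Sum>k\<in>UNIV. y $ k * m_vec L b k y)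
      = (\<Sum>k\<in>UNIV. b $ k * y $ k) - (b \<bullet> y) / L y * (\<Sum>k\<in>UNIV. y $ k * pd k L y)"
    by (simp add: m_vec_def right_diff_distrib sum_subtractf sum_distrib_left mult.commute
        mult.left_commute)
  also have "\<dots> = 0"
    using euler[OF y] pos[OF y] by (simp add: inner_vec_def)
  finally show ?thesis .
qed

lemma cartan_changed:
  assumes y: "y \<noteq> 0"
  shows "cartan L' i j k y = \<phi> * L' y / L y * cartan L i j k y
    + \<phi> / (2 * L y) * (h_ang L i j y * m_vec L b k y + h_ang L k j y * m_vec L b i y
                      + h_ang L k i y * m_vec L b j y)"
  unfolding cartan_eq[OF smooth y] cartan_eq[OF changed.smooth y] h_ang_eq[OF smooth y] m_vec_def
    pd_changed[OF y] pd2_changed[OF y] pd3_changed[OF y]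
  using pos[OF y] by (simp add: field_simps)

lemma fund_ginv_changed:
  assumes y: "y \<noteq> 0"
  obtains v w where "\<And>j k. \<phi> * L' y / L y * fund_ginv L' j k y
    = fund_ginv L j k y + y $ j * v k + w j * y $ k"
proof -
  let ?\<tau> = "\<phi> * L' y / L y"
  have update: "?\<tau> * fund_ginv L' j k y = fund_ginv L j k y
      - (\<Sum>a\<in>UNIV. fund_ginv L' j a y * pd a L' y) * (\<Sum>c\<in>UNIV. pd c L' y * fund_ginv L c k y)
      + ?\<tau> * ((\<Sum>a\<in>UNIV. fund_ginv L' j a y * pd a L y) * (\<Sum>c\<in>UNIV. pd c L y * fund_ginv L c k y))"
    for j k
    by (rule inverse_update_rank_two[where g' = "\<lambda>a c. fund_g L' a c y" and g = "\<lambda>a c. fund_g L a c y"])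
      (use changed.fund_ginv_g[OF y] fund_g_ginv[OF y] fund_g_changed[OF y] in auto)
  show ?thesis
  proof (rule that)
    fix j k
    show "?\<tau> * fund_ginv L' j k y = fund_ginv L j k y
        + y $ j * (- (\<Sum>c\<in>UNIV. pd c L' y * fund_ginv L c k y) / L' y)
        + ?\<tau> * (\<Sum>a\<in>UNIV. fund_ginv L' j a y * pd a L y) / L y * y $ k"
      using update[of j k] unfolding changed.fund_ginv_l[OF y] l_fund_ginv[OF y]
      by (simp add: algebra_simps)
  qed
qed

lemma ginv_contract_cartan_changed:
  assumes y: "y \<noteq> 0"
  shows "(\<Sum>j\<in>UNIV. \<Sum>k\<in>UNIV. fund_ginv L j k y * cartan L' i j k y)
    = \<phi> * L' y / L y * cartan_tr L i y + \<phi> * (real CARD('n) + 1) * m_vec L b i y / (2 * L y)"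
proof -
  let ?G = "\<lambda>j k. fund_ginv L j k y" and ?h = "\<lambda>j k. h_ang L j k y" and ?m = "\<lambda>k. m_vec L b k y"
  have first: "(\<Sum>j\<in>UNIV. \<Sum>k\<in>UNIV. ?G j k * (?h i j * ?m k)) = ?m i"
    using h_ang_ginv_orthogonal[OF y m_vec_orthogonal[OF y], of i]
    by (simp add: sum_distrib_left mult.left_commute)
  have third: "(\<Sum>j\<in>UNIV. \<Sum>k\<in>UNIV. ?G j k * (?h k i * ?m j)) = ?m i"
  proof -
    have "(\<Sum>j\<in>UNIV. \<Sum>k\<in>UNIV. ?G j k * (?h k i * ?m j)) = (\<Sum>k\<in>UNIV. \<Sum>j\<in>UNIV. ?G j k * (?h k i * ?m j))"
      by (rule sum.swap)
    also have "\<dots> = (\<Sum>k\<in>UNIV. \<Sum>j\<in>UNIV. ?G k j * (?h i k * ?m j))"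
      using fund_ginv_sym[OF y] h_ang_sym[OF y] by simp
    finally show ?thesis
      using first by simp
  qed
  have "fund_ginv L j k y * cartan L' i j k y = \<phi> * L' y / L y * (?G j k * cartan L i j k y)
      + \<phi> / (2 * L y) * (?G j k * (?h i j * ?m k)) + \<phi> / (2 * L y) * ?m i * (?G j k * ?h k j)
      + \<phi> / (2 * L y) * (?G j k * (?h k i * ?m j))" for j k
    unfolding cartan_changed[OF y] by (simp add: algebra_simps)
  then have "(\<Sum>j\<in>UNIV. \<Sum>k\<in>UNIV. fund_ginv L j k y * cartan L' i j k y)
      = \<phi> * L' y / L y * cartan_tr L i y + \<phi> / (2 * L y) * ?m i
        + \<phi> / (2 * L y) * ?m i * (real CARD('n) - 1) + \<phi> / (2 * L y) * ?m i"
    by (simp only: sum.distrib sum_distrib_left[symmetric] cartan_tr_def first third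
        trace_ginv_h_ang[OF y])
  with pos[OF y] show ?thesis
    by (simp add: field_simps)
qed

lemma cartan_tr_changed:
  assumes y: "y \<noteq> 0"
  shows "cartan_tr L' i y = cartan_tr L i y + (real CARD('n) + 1) * m_vec L b i y / (2 * L' y)"
proof -
  let ?\<tau> = "\<phi> * L' y / L y"
  obtain v w where inv: "\<And>j k. ?\<tau> * fund_ginv L' j k y = fund_ginv L j k y + y $ j * v k + w j * y $ k"
    using fund_ginv_changed[OF y] by blast
  have "?\<tau> * cartan_tr L' i y = (\<Sum>j\<in>UNIV. \<Sum>k\<in>UNIV. (?\<tau> * fund_ginv L' j k y) * cartan L' i j k y)"
    by (simp add: cartan_tr_def sum_distrib_left mult.assoc)
  also have "\<dots> = (\<Sum>j\<in>UNIV. \<Sum>k\<in>UNIV. fund_ginv L j k y * cartan L' i j k y)"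
    unfolding inv using changed.cartan_y[OF y] changed.y_cartan[OF y]
    by (rule sum_contract_annihilated)
  also have "\<dots> = ?\<tau> * cartan_tr L i y + \<phi> * (real CARD('n) + 1) * m_vec L b i y / (2 * L y)"
    by (rule ginv_contract_cartan_changed[OF y])
  also have "\<phi> * (real CARD('n) + 1) * m_vec L b i y / (2 * L y)
      = ?\<tau> * ((real CARD('n) + 1) * m_vec L b i y / (2 * L' y))"
  proof -
    have scale: "\<phi> * a * z / (2 * L y) = \<phi> * c / L y * (a * z / (2 * c))" if "c \<noteq> 0" for a z c
      using that pos[OF y] by (simp add: field_simps)
    show ?thesis
      by (rule scale) (use changed.pos[OF y] in simp)
  qed
  finally have "?\<tau> * cartan_tr L' i y
      = ?\<tau> * (cartan_tr L i y + (real CARD('n) + 1) * m_vec L b i y / (2 * L' y))"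
    by (simp only: distrib_left)
  moreover have "?\<tau> \<noteq> 0"
    using pos[OF y] changed.pos[OF y] \<phi>_pos by simp
  ultimately show ?thesis
    by simp
qed

lemma M_vec_changed:
  assumes y: "y \<noteq> 0"
  shows "M_vec L' i y = M_vec L i y + m_vec L b i y / (2 * L' y)"
  unfolding M_vec_def cartan_tr_changed[OF y]
  by (simp add: add_divide_distrib)

lemma K_tensor_changed:
  assumes y: "y \<noteq> 0"
  shows "K_tensor L' i j k y = \<phi> * K_tensor L i j k y"
proof -
  have algebra: "1 / c * (\<phi> * c / L y * C + \<phi> / (2 * L y) * (h1 * m3 + h2 * m1 + h3 * m2)
      - (\<phi> * c / L y * h1 * (M3 + m3 / (2 * c)) + \<phi> * c / L y * h2 * (M1 + m1 / (2 * c))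
         + \<phi> * c / L y * h3 * (M2 + m2 / (2 * c))))
    = \<phi> * (1 / L y * (C - (h1 * M3 + h2 * M1 + h3 * M2)))"
    if "c \<noteq> 0" for c C h1 h2 h3 m1 m2 m3 M1 M2 M3
    using that pos[OF y] by (simp add: field_simps)
  show ?thesis
    unfolding K_tensor_def cartan_changed[OF y] h_ang_changed[OF y] M_vec_changed[OF y]
    by (rule algebra) (use changed.pos[OF y] in simp)
qed

end

theorem proposition1:
  fixes L :: "real^'n::finite \<Rightarrow> real" and \<sigma> :: real and b :: "real^'n"
  assumes "CARD('n) \<ge> 3"
    and "finsler L"
    and "finsler (\<lambda>y. exp \<sigma> * L y + b \<bullet> y)"
  shows "\<forall>y i j k. y \<noteq> 0 \<longrightarrow>
    K_tensor (\<lambda>y. exp \<sigma> * L y + b \<bullet> y) i j k y = exp \<sigma> * K_tensor L i j k y"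
proof -
  interpret conformal_beta_change L "exp \<sigma>" b
    using assms(2,3) by unfold_locales simp_all
  show ?thesis
    using K_tensor_changed by blast
qed

end
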